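(* Let $n\ge 3$ be an odd integer. Then for all $m\in\{3,\ldots,n-1\}$ with $\gcd(m,n)=1$ and $m\neq (n+1)/2$, we have $S(2,n)>S(m,n)$.
   Context: For integers $m,n$ with $n\neq 0$ and $\gcd(m,n)=1$, the Dedekind sum is $s(m,n)=\sum_{j=1}^{|n|}((j/n))((mj/n))$, where $((t))=t-\lfloor t\rfloor-1/2$ if $t\in\mathbb{R}\setminus\mathbb{Z}$ and $((t))=0$ if $t\in\mathbb{Z}$. Define $S(m,n)=12\,s(m,n)$. *)

theory Defs
  imports Complex_Main
begin

definition sawtooth :: "real \<Rightarrow> real" where
  "sawtooth t = (if t \<in> \<int> then 0 else t - of_int \<lfloor>t\<rfloor> - 1/2)"

definition dedekind_sum :: "int \<Rightarrow> int \<Rightarrow> real" where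
  "dedekind_sum m n = (\<Sum>j=1..\<bar>n\<bar>. sawtooth (of_int j / of_int n) * sawtooth (of_int (m*j) / of_int n))"

definition S :: "int \<Rightarrow> int \<Rightarrow> real" where
  "S m n = 12 * dedekind_sum m n"

end

theory Submission
  imports Defs
begin

text \<open>
  Write \<open>S(h,k) = 3 D(h,k) / k\<^sup>2\<close> with the integer
  \<open>D(h,k) = \<Sum> (2j - k)(2(hj mod k) - k)\<close>, summed over \<open>0 < j < k\<close>.
  As multiplication by \<open>h\<close> permutes the nonzero residues modulo \<open>k\<close>, the inequality
  \<open>2|ab| \<le> a\<^sup>2 + b\<^sup>2\<close> gives \<open>|S(h,k)| \<le> S(1,k) = (k-1)(k-2)/k\<close>, and replacing \<open>h\<close> by
  \<open>k - h\<close> changes the sign of \<open>S(h,k)\<close>. Counting lattice points below the diagonal of the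
  \<open>h \<times> k\<close> rectangle yields the reciprocity law
  \<open>S(h,k) + S(k,h) = h/k + k/h + 1/(hk) - 3\<close>.

  Since \<open>S(n,2) = 0\<close> for odd \<open>n\<close>, reciprocity evaluates \<open>S(2,n)\<close> exactly, and for
  any \<open>m\<close> it determines \<open>S(m,n)\<close> up to the error \<open>|S(n,m)| \<le> (m-1)(m-2)/m\<close>.
  For \<open>3 \<le> m \<le> (n-1)/2\<close> the resulting upper bound is already below \<open>S(2,n)\<close>; for
  \<open>m \<ge> (n+3)/2\<close> the lower bound for \<open>S(n-m,n) = -S(m,n)\<close> does the job. Both comparisons
  reduce to a polynomial inequality in \<open>m\<close> and \<open>n\<close>.
\<close>

section \<open>Integer division and residues\<close>

lemma double_sum_Icc_int: "k \<ge> 0 \<Longrightarrow> 2 * (\<Sum>j=1..k. j) = k * (k + 1 :: int)"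
proof (induction k rule: int_ge_induct)
  case (step i)
  then have "{1..i+1} = insert (i+1) {1..i}" by auto
  with step show ?case by (simp add: algebra_simps)
qed simp

lemma six_sum_squares_Icc_int: "k \<ge> 0 \<Longrightarrow> 6 * (\<Sum>j=1..k. j^2) = k * (k + 1) * (2*k + 1 :: int)"
proof (induction k rule: int_ge_induct)
  case (step i)
  then have "{1..i+1} = insert (i+1) {1..i}" by auto
  with step show ?case by (simp add: algebra_simps power2_eq_square)
qed simp

lemma int_le_div_iff_mult_le: "(k::int) > 0 \<Longrightarrow> i \<le> x div k \<longleftrightarrow> k * i \<le> x"
  by (smt (verit, ccfv_threshold) mod_mult_div_eq nonzero_mult_div_cancel_left pos_mod_sign zdiv_mono1)

lemma sawtooth_of_int_divide:
  fixes x k :: int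
  assumes "k > 0"
  shows "sawtooth (of_int x / of_int k) =
    (if k dvd x then 0 else (2 * of_int (x mod k) - of_int k) / (2 * of_int k))"
proof (cases "k dvd x")
  case False
  have "(of_int x :: real) = of_int k * of_int (x div k) + of_int (x mod k)"
    by (metis of_int_add of_int_mult mult_div_mod_eq)
  then have "(of_int x :: real) / of_int k - of_int (x div k) = of_int (x mod k) / of_int k"
    using assms by (simp add: field_simps)
  moreover have "(of_int x :: real) / of_int k \<notin> \<int>"
    using False assms by (simp add: of_int_div_of_int_in_Ints_iff)
  ultimately show ?thesis
    using False assms by (simp add: sawtooth_def floor_divide_of_int_eq diff_divide_distrib)
qed (use assms in \<open>auto simp: sawtooth_def of_int_div_of_int_in_Ints_iff\<close>)

lemma coprime_not_dvd_mult:
  fixes h k j :: int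
  assumes "coprime h k" and "j \<in> {1..k-1}"
  shows "\<not> k dvd h * j"
  using assms by (auto simp: coprime_dvd_mult_right_iff coprime_commute dest: zdvd_imp_le)

lemma coprime_diff_self_left: "coprime (k - h) k \<longleftrightarrow> coprime h (k::int)"
  by (simp add: coprime_iff_gcd_eq_1 gcd_diff2)

lemma bij_betw_mult_mod:
  fixes h k :: int
  assumes "coprime h k"
  shows "bij_betw (\<lambda>j. (h * j) mod k) {1..k-1} {1..k-1}"
proof -
  have "inj_on (\<lambda>j. (h * j) mod k) {1..k-1}"
  proof (rule inj_onI)
    fix a b assume a: "a \<in> {1..k-1}" and b: "b \<in> {1..k-1}" and "(h * a) mod k = (h * b) mod k"
    then have "k dvd h * a - h * b" by (simp only: mod_eq_dvd_iff)
    then have "k dvd h * (a - b)" by (simp add: right_diff_distrib)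
    then have "k dvd a - b" using assms by (simp add: coprime_dvd_mult_right_iff coprime_commute)
    then have "a mod k = b mod k" by (simp only: mod_eq_dvd_iff)
    moreover have "a mod k = a" "b mod k = b" using a b by auto
    ultimately show "a = b" by simp
  qed
  moreover have "(\<lambda>j. (h * j) mod k) ` {1..k-1} \<subseteq> {1..k-1}"
  proof (rule image_subsetI)
    fix j assume "j \<in> {1..k-1}"
    then have "(h * j) mod k \<noteq> 0" and k: "0 < k"
      using coprime_not_dvd_mult[OF assms] by (auto simp: dvd_eq_mod_eq_0)
    moreover have "0 \<le> (h * j) mod k" "(h * j) mod k < k" using k by simp_all
    ultimately show "(h * j) mod k \<in> {1..k-1}" by simp
  qed
  ultimately show ?thesis by (simp add: bij_betw_def endo_inj_surj)
qed

lemma sum_mult_mod_reindex: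
  fixes h k :: int
  assumes "coprime h k"
  shows "(\<Sum>j=1..k-1. f ((h * j) mod k)) = (\<Sum>j=1..k-1. f j)"
  using sum.reindex_bij_betw[OF bij_betw_mult_mod[OF assms]] .

lemma abs_sum_mult_reindex_le:
  fixes f :: "'a \<Rightarrow> 'b::linordered_idom"
  assumes "bij_betw g A A"
  shows "\<bar>\<Sum>j\<in>A. f j * f (g j)\<bar> \<le> (\<Sum>j\<in>A. (f j)^2)"
proof -
  have "2 * \<bar>f j * f (g j)\<bar> \<le> (f j)^2 + (f (g j))^2" for j
  proof -
    have "0 \<le> (\<bar>f j\<bar> - \<bar>f (g j)\<bar>)^2" by simp
    then show ?thesis by (simp add: abs_mult power2_eq_square algebra_simps)
  qed
  then have "2 * (\<Sum>j\<in>A. \<bar>f j * f (g j)\<bar>) \<le> (\<Sum>j\<in>A. (f j)^2) + (\<Sum>j\<in>A. (f (g j))^2)"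
    by (simp add: sum_distrib_left flip: sum.distrib) (rule sum_mono)
  also have "(\<Sum>j\<in>A. (f (g j))^2) = (\<Sum>j\<in>A. (f j)^2)"
    using sum.reindex_bij_betw[OF assms] .
  finally show ?thesis
    by (simp add: order_trans[OF sum_abs])
qed

section \<open>The Dedekind sum as a quotient of integers\<close>

definition dedekind_numerator :: "int \<Rightarrow> int \<Rightarrow> int" where
  "dedekind_numerator h k = (\<Sum>j=1..k-1. (2*j - k) * (2 * ((h * j) mod k) - k))"

lemma dedekind_sum_eq_numerator:
  fixes h k :: int
  assumes k: "k > 0" and c: "coprime h k"
  shows "dedekind_sum h k = of_int (dedekind_numerator h k) / (4 * of_int k^2)"
proof -
  have "{1..k} = insert k {1..k-1}" using k by auto
  moreover have "sawtooth 1 = 0" by (simp add: sawtooth_def)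
  ultimately have "dedekind_sum h k =
      (\<Sum>j=1..k-1. sawtooth (of_int j / of_int k) * sawtooth (of_int (h * j) / of_int k))"
    using k by (simp add: dedekind_sum_def)
  also have "\<dots> = (\<Sum>j=1..k-1. of_int ((2*j - k) * (2 * ((h * j) mod k) - k)) / (4 * of_int k^2))"
  proof (rule sum.cong)
    fix j assume j: "j \<in> {1..k-1}"
    then have "\<not> k dvd j" "\<not> k dvd h * j" "j mod k = j"
      using coprime_not_dvd_mult[of 1 k j] coprime_not_dvd_mult[OF c j] by auto
    then have "sawtooth (of_int j / of_int k) * sawtooth (of_int (h * j) / of_int k) =
        (2 * of_int j - of_int k) / (2 * of_int k) * ((2 * of_int ((h * j) mod k) - of_int k) / (2 * of_int k))"
      using sawtooth_of_int_divide[OF k, of j] sawtooth_of_int_divide[OF k, of "h * j"] by simp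
    with k show "sawtooth (of_int j / of_int k) * sawtooth (of_int (h * j) / of_int k) =
        of_int ((2*j - k) * (2 * ((h * j) mod k) - k)) / (4 * of_int k^2)"
      by (simp add: field_simps power2_eq_square)
  qed simp
  finally show ?thesis by (simp add: dedekind_numerator_def sum_divide_distrib)
qed

lemma S_eq_numerator:
  fixes h k :: int
  assumes "k > 0" and "coprime h k"
  shows "S h k = 3 * of_int (dedekind_numerator h k) / of_int k^2"
  using assms by (simp add: S_def dedekind_sum_eq_numerator)

lemma dedekind_numerator_one: "3 * dedekind_numerator 1 k = k * (k - 1) * (k - 2)" if "k > 0"
proof -
  have "dedekind_numerator 1 k = (\<Sum>j=1..k-1. 4 * j^2 - 4 * k * j + k^2)"
    unfolding dedekind_numerator_def by (rule sum.cong) (auto simp: algebra_simps power2_eq_square)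
  also have "\<dots> = 4 * (\<Sum>j=1..k-1. j^2) - 4 * k * (\<Sum>j=1..k-1. j) + (k - 1) * k^2"
    using that by (simp add: sum.distrib sum_subtractf sum_distrib_left)
  finally have "3 * dedekind_numerator 1 k =
      2 * (6 * (\<Sum>j=1..k-1. j^2)) - 6 * k * (2 * (\<Sum>j=1..k-1. j)) + 3 * (k - 1) * k^2"
    by simp
  also have "\<dots> = 2 * ((k - 1) * k * (2*k - 1)) - 6 * k * ((k - 1) * k) + 3 * (k - 1) * k^2"
  proof -
    have "2 * (\<Sum>j=1..k-1. j) = (k - 1) * k" "6 * (\<Sum>j=1..k-1. j^2) = (k - 1) * k * (2*k - 1)"
      using that double_sum_Icc_int[of "k-1"] six_sum_squares_Icc_int[of "k-1"] by simp_all
    then show ?thesis by (simp only:)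
  qed
  also have "\<dots> = k * (k - 1) * (k - 2)"
    by (simp add: algebra_simps power2_eq_square)
  finally show ?thesis .
qed

lemma abs_dedekind_numerator_le:
  fixes h k :: int
  assumes "coprime h k"
  shows "\<bar>dedekind_numerator h k\<bar> \<le> dedekind_numerator 1 k"
proof -
  have "dedekind_numerator 1 k = (\<Sum>j=1..k-1. (2*j - k)^2)"
    unfolding dedekind_numerator_def by (rule sum.cong) (auto simp: power2_eq_square)
  then show ?thesis
    using abs_sum_mult_reindex_le[OF bij_betw_mult_mod[OF assms], of "\<lambda>j. 2*j - k"]
    by (simp add: dedekind_numerator_def)
qed

lemma dedekind_numerator_reflect:
  fixes h k :: int
  assumes c: "coprime h k"
  shows "dedekind_numerator (k - h) k = - dedekind_numerator h k"
proof -
  have "(2*j - k) * (2 * (((k - h) * j) mod k) - k) = - ((2*j - k) * (2 * ((h * j) mod k) - k))"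
    if "j \<in> {1..k-1}" for j
  proof -
    have "(h * j) mod k \<noteq> 0"
      using coprime_not_dvd_mult[OF c that] by (simp add: dvd_eq_mod_eq_0)
    moreover have "((k - h) * j) mod k = (- (h * j)) mod k"
      by (metis mod_mult_self3 left_diff_distrib mult.commute add.commute diff_conv_add_uminus)
    ultimately have eq: "((k - h) * j) mod k = k - (h * j) mod k" by (simp add: zmod_zminus1_eq_if)
    show ?thesis by (simp only: eq) (simp add: algebra_simps)
  qed
  then show ?thesis
    unfolding dedekind_numerator_def by (simp add: sum_negf[symmetric])
qed

lemma S_one: "S 1 k = of_int ((k - 1) * (k - 2)) / of_int k" if "k > 0"
proof -
  have "3 * real_of_int (dedekind_numerator 1 k) = of_int k * of_int ((k - 1) * (k - 2))"
    using arg_cong[OF dedekind_numerator_one[OF that], of real_of_int] by simp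
  with that show ?thesis
    by (simp add: S_eq_numerator power2_eq_square)
qed

lemma abs_S_le_S_one:
  fixes h k :: int
  assumes "k > 0" and "coprime h k"
  shows "\<bar>S h k\<bar> \<le> S 1 k"
proof -
  have "\<bar>real_of_int (dedekind_numerator h k)\<bar> \<le> of_int (dedekind_numerator 1 k)"
    using abs_dedekind_numerator_le[OF assms(2)] by linarith
  with assms show ?thesis
    by (simp add: S_eq_numerator abs_mult abs_divide divide_right_mono)
qed

lemma S_reflect:
  fixes h k :: int
  assumes "k > 0" and "coprime h k"
  shows "S (k - h) k = - S h k"
  using assms by (simp add: S_eq_numerator coprime_diff_self_left dedekind_numerator_reflect)

section \<open>The reciprocity law\<close>

lemma sum_Icc_if_mult_le:
  fixes a b N :: int
  assumes "a > 0" and "b div a \<le> N"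
  shows "(\<Sum>i=1..N. if a * i \<le> b then f i else 0) = (\<Sum>i=1..b div a. f i)"
proof -
  have "{i \<in> {1..N}. a * i \<le> b} = {1..b div a}"
  proof (rule set_eqI)
    fix i
    have "a * i \<le> b \<longleftrightarrow> i \<le> b div a"
      using int_le_div_iff_mult_le[OF assms(1)] by simp
    then show "i \<in> {i \<in> {1..N}. a * i \<le> b} \<longleftrightarrow> i \<in> {1..b div a}"
      using assms(2) by auto
  qed
  then show ?thesis
    by (metis (no_types) finite_atLeastAtMost_int sum.inter_filter)
qed

lemma sum_below_line:
  fixes h k j :: int
  assumes h: "h > 0" and c: "coprime h k" and j: "j \<in> {1..k-1}"
  shows "(\<Sum>i=1..h-1. if k * i < h * j then j else 0) = j * (h * j div k)"
proof -
  have k: "k > 0" using j by simp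
  have "k * i \<noteq> h * j" for i
    using coprime_not_dvd_mult[OF c j] by (metis dvd_triv_left)
  then have "(\<Sum>i=1..h-1. if k * i < h * j then j else 0) = (\<Sum>i=1..h-1. if k * i \<le> h * j then j else 0)"
    by (simp add: order_le_less)
  also have "\<dots> = (\<Sum>i=1..h * j div k. j)"
  proof (rule sum_Icc_if_mult_le[OF k])
    have "h * j < k * h" using j h by (simp add: mult.commute)
    then show "h * j div k \<le> h - 1"
      using int_le_div_iff_mult_le[OF k, of h "h * j"] by simp
  qed
  also have "\<dots> = j * (h * j div k)"
    using h j k by (simp add: pos_imp_zdiv_nonneg_iff)
  finally show ?thesis .
qed

lemma double_sum_above_line:
  fixes h k i :: int
  assumes h: "h > 0" and k: "k > 0" and c: "coprime h k" and i: "i \<in> {1..h-1}"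
  shows "2 * (\<Sum>j=1..k-1. if k * i < h * j then j else 0) = k * (k - 1) - (k * i div h) * (k * i div h + 1)"
proof -
  define g where "g = k * i div h"
  have g: "0 \<le> g" "g \<le> k - 1"
  proof -
    show "0 \<le> g" unfolding g_def using i h k by (simp add: pos_imp_zdiv_nonneg_iff)
    have "k * i < h * k" using i k by (simp add: mult.commute)
    then show "g \<le> k - 1" unfolding g_def using int_le_div_iff_mult_le[OF h, of k "k * i"] by simp
  qed
  have "(\<Sum>j=1..k-1. if k * i < h * j then j else 0) =
      (\<Sum>j=1..k-1. j - (if h * j \<le> k * i then j else 0))"
    by (rule sum.cong) auto
  also have "\<dots> = (\<Sum>j=1..k-1. j) - (\<Sum>j=1..k-1. if h * j \<le> k * i then j else 0)"
    by (rule sum_subtractf)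
  also have "(\<Sum>j=1..k-1. if h * j \<le> k * i then j else 0) = (\<Sum>j=1..g. j)"
    unfolding g_def by (rule sum_Icc_if_mult_le[OF h]) (use g g_def in simp)
  moreover have "2 * (\<Sum>j=1..k-1. j) = k * (k - 1)" "2 * (\<Sum>j=1..g. j) = g * (g + 1)"
    using double_sum_Icc_int[of "k - 1"] double_sum_Icc_int[of g] g k by (simp_all add: mult.commute)
  ultimately show ?thesis
    unfolding g_def[symmetric] by linarith
qed

lemma lattice_point_moment:
  fixes h k :: int
  assumes h: "h > 0" and k: "k > 0" and c: "coprime h k"
  shows "2 * (\<Sum>j=1..k-1. j * (h * j div k)) + (\<Sum>i=1..h-1. (k * i div h) * (k * i div h + 1))
    = (h - 1) * k * (k - 1)"
proof -
  \<comment> \<open>Sum the weight \<open>j\<close> over the lattice points \<open>(i,j)\<close> with \<open>k i < h j\<close>, by columns and by rows.\<close>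
  have "2 * (\<Sum>j=1..k-1. j * (h * j div k))
      = 2 * (\<Sum>j=1..k-1. \<Sum>i=1..h-1. if k * i < h * j then j else 0)"
    using sum_below_line[OF h c] by simp
  also have "\<dots> = (\<Sum>i=1..h-1. 2 * (\<Sum>j=1..k-1. if k * i < h * j then j else 0))"
    by (subst sum.swap) (simp add: sum_distrib_left)
  also have "\<dots> = (\<Sum>i=1..h-1. k * (k - 1) - (k * i div h) * (k * i div h + 1))"
    using double_sum_above_line[OF h k c] by simp
  also have "\<dots> = (h - 1) * (k * (k - 1)) - (\<Sum>i=1..h-1. (k * i div h) * (k * i div h + 1))"
    using h by (simp add: sum_subtractf)
  finally show ?thesis by (simp add: algebra_simps)
qed

definition residue_moment :: "int \<Rightarrow> int \<Rightarrow> int" where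
  "residue_moment h k = (\<Sum>j=1..k-1. j * ((h * j) mod k))"

lemma dedekind_numerator_eq_residue_moment:
  fixes h k :: int
  assumes k: "k > 0" and c: "coprime h k"
  shows "dedekind_numerator h k = 4 * residue_moment h k - k^2 * (k - 1)"
proof -
  have "dedekind_numerator h k = (\<Sum>j=1..k-1. 4 * (j * ((h * j) mod k)) - 2 * k * j - 2 * k * ((h * j) mod k) + k^2)"
    unfolding dedekind_numerator_def by (rule sum.cong) (simp_all add: algebra_simps power2_eq_square)
  also have "\<dots> = 4 * residue_moment h k - 2 * k * (\<Sum>j=1..k-1. j)
      - 2 * k * (\<Sum>j=1..k-1. (h * j) mod k) + (k - 1) * k^2"
    using k by (simp add: residue_moment_def sum.distrib sum_subtractf sum_distrib_left)
  also have "(\<Sum>j=1..k-1. (h * j) mod k) = (\<Sum>j=1..k-1. j)"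
    using sum_mult_mod_reindex[OF c, of "\<lambda>x. x"] .
  finally show ?thesis
    using double_sum_Icc_int[of "k - 1"] k by (simp add: algebra_simps power2_eq_square)
qed

lemma residue_moment_eq_floor_moment:
  "residue_moment h k = h * (\<Sum>j=1..k-1. j^2) - k * (\<Sum>j=1..k-1. j * (h * j div k))"
proof -
  have "j * ((h * j) mod k) = h * j^2 - k * (j * (h * j div k))" for j
    by (simp add: minus_div_mult_eq_mod[symmetric] algebra_simps power2_eq_square)
  then show ?thesis
    by (simp add: residue_moment_def sum_subtractf sum_distrib_left)
qed

lemma double_sum_floor:
  fixes h k :: int
  assumes h: "h > 0" and c: "coprime k h"
  shows "2 * (\<Sum>i=1..h-1. k * i div h) = (k - 1) * (h - 1)"
proof -
  have "h * (k * i div h) = k * i - (k * i) mod h" for i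
    by (simp add: minus_mod_eq_mult_div)
  then have "h * (\<Sum>i=1..h-1. k * i div h) = k * (\<Sum>i=1..h-1. i) - (\<Sum>i=1..h-1. (k * i) mod h)"
    by (simp add: sum_distrib_left sum_subtractf)
  also have "(\<Sum>i=1..h-1. (k * i) mod h) = (\<Sum>i=1..h-1. i)"
    using sum_mult_mod_reindex[OF c, of "\<lambda>x. x"] .
  finally have "h * (2 * (\<Sum>i=1..h-1. k * i div h)) = (k - 1) * (2 * (\<Sum>i=1..h-1. i))"
    by (simp add: algebra_simps)
  also have "\<dots> = h * ((k - 1) * (h - 1))"
    using double_sum_Icc_int[of "h - 1"] h by simp
  finally show ?thesis using h by simp
qed

lemma sum_floor_squares:
  fixes h k :: int
  assumes h: "h > 0" and c: "coprime k h"
  shows "h^2 * (\<Sum>i=1..h-1. (k * i div h)^2) = (k^2 + 1) * (\<Sum>i=1..h-1. i^2) - 2 * k * residue_moment k h"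
proof -
  have "h^2 * (k * i div h)^2 = k^2 * i^2 - 2 * k * (i * ((k * i) mod h)) + ((k * i) mod h)^2" for i
  proof -
    have "h * (k * i div h) = k * i - (k * i) mod h" by (simp add: minus_mod_eq_mult_div)
    then have "(h * (k * i div h))^2 = (k * i - (k * i) mod h)^2" by simp
    then show ?thesis by (simp add: algebra_simps power2_eq_square)
  qed
  then have "h^2 * (\<Sum>i=1..h-1. (k * i div h)^2)
      = k^2 * (\<Sum>i=1..h-1. i^2) - 2 * k * residue_moment k h + (\<Sum>i=1..h-1. ((k * i) mod h)^2)"
    by (simp add: residue_moment_def sum_distrib_left sum.distrib sum_subtractf)
  also have "(\<Sum>i=1..h-1. ((k * i) mod h)^2) = (\<Sum>i=1..h-1. i^2)"
    using sum_mult_mod_reindex[OF c, of "\<lambda>x. x^2"] .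
  finally show ?thesis by (simp add: algebra_simps)
qed

lemma residue_moment_reciprocity:
  fixes h k :: int
  assumes h: "h > 0" and k: "k > 0" and c: "coprime h k"
  shows "12 * h^2 * residue_moment h k + 12 * k^2 * residue_moment k h
    = 3 * h^2 * k^2 * (h + k - 3) + h * k * (h^2 + k^2 + 1)"
proof -
  define A where "A = (\<Sum>j=1..k-1. j * (h * j div k))"
  define G1 where "G1 = (\<Sum>i=1..h-1. k * i div h)"
  define G2 where "G2 = (\<Sum>i=1..h-1. (k * i div h)^2)"
  define Qk where "Qk = (\<Sum>j=1..k-1. j^2)"
  define Qh where "Qh = (\<Sum>i=1..h-1. i^2)"
  have c': "coprime k h" using c by (simp add: coprime_commute)
  have "(\<Sum>i=1..h-1. (k * i div h) * (k * i div h + 1)) = G2 + G1"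
    by (simp add: G1_def G2_def algebra_simps power2_eq_square sum.distrib)
  then have lattice: "2 * A + (G2 + G1) = (h - 1) * k * (k - 1)"
    using lattice_point_moment[OF h k c] by (simp add: A_def)
  have Qk: "6 * Qk = (k - 1) * k * (2*k - 1)" and Qh: "6 * Qh = (h - 1) * h * (2*h - 1)"
    using six_sum_squares_Icc_int[of "k - 1"] six_sum_squares_Icc_int[of "h - 1"] h k
    by (simp_all add: Qk_def Qh_def algebra_simps)
  note Rk = residue_moment_eq_floor_moment[of h k, folded A_def Qk_def]
  note Rh = sum_floor_squares[OF h c', folded G2_def Qh_def]
  note G1 = double_sum_floor[OF h c', folded G1_def]
  \<comment> \<open>The claim is the following integer combination of the six identities above.\<close>
  have "12 * h^2 * residue_moment h k + 12 * k^2 * residue_moment k h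
      - (3 * h^2 * k^2 * (h + k - 3) + h * k * (h^2 + k^2 + 1))
    = 12 * h^2 * (residue_moment h k - (h * Qk - k * A))
      - 6 * h^2 * k * (2 * A + (G2 + G1) - (h - 1) * k * (k - 1))
      + 6 * k * (h^2 * G2 - ((k^2 + 1) * Qh - 2 * k * residue_moment k h))
      + 3 * h^2 * k * (2 * G1 - (k - 1) * (h - 1))
      + 2 * h^3 * (6 * Qk - (k - 1) * k * (2*k - 1))
      + k * (k^2 + 1) * (6 * Qh - (h - 1) * h * (2*h - 1))"
    by (simp add: algebra_simps power2_eq_square power3_eq_cube)
  also have "\<dots> = 0"
    using Rk lattice Rh G1 Qk Qh by simp
  finally show ?thesis by simp
qed

lemma dedekind_numerator_reciprocity:
  fixes h k :: int
  assumes h: "h > 0" and k: "k > 0" and c: "coprime h k"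
  shows "3 * h^2 * dedekind_numerator h k + 3 * k^2 * dedekind_numerator k h
    = h * k * (h^2 + k^2 + 1) - 3 * h^2 * k^2"
proof -
  have c': "coprime k h" using c by (simp add: coprime_commute)
  show ?thesis
    using residue_moment_reciprocity[OF h k c]
    by (simp add: dedekind_numerator_eq_residue_moment[OF k c] dedekind_numerator_eq_residue_moment[OF h c']
        algebra_simps power2_eq_square)
qed

lemma S_reciprocity:
  fixes h k :: int
  assumes h: "h > 0" and k: "k > 0" and c: "coprime h k"
  shows "S h k + S k h = of_int h / of_int k + of_int k / of_int h + 1 / (of_int h * of_int k) - 3"
proof -
  have c': "coprime k h" using c by (simp add: coprime_commute)
  define x y a b where "x = real_of_int h" and "y = real_of_int k"
    and "a = real_of_int (dedekind_numerator h k)" and "b = real_of_int (dedekind_numerator k h)"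
  have xy: "x > 0" "y > 0" using h k by (simp_all add: x_def y_def)
  have recip: "3 * x^2 * a + 3 * y^2 * b = x * y * (x^2 + y^2 + 1) - 3 * x^2 * y^2"
    using arg_cong[OF dedekind_numerator_reciprocity[OF h k c], of real_of_int]
    by (simp add: x_def y_def a_def b_def)
  have "S h k + S k h = 3 * a / y^2 + 3 * b / x^2"
    by (simp add: S_eq_numerator[OF k c] S_eq_numerator[OF h c'] x_def y_def a_def b_def)
  also have "\<dots> = (3 * x^2 * a + 3 * y^2 * b) / (x^2 * y^2)"
    using xy by (simp add: field_simps)
  also have "\<dots> = x / y + y / x + 1 / (x * y) - 3"
    unfolding recip using xy by (simp add: field_simps power2_eq_square)
  finally show ?thesis by (simp add: x_def y_def)
qed

section \<open>Comparison with \<open>S(2,n)\<close>\<close>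

lemma S_two:
  fixes n :: int
  assumes "n > 0" and "odd n"
  shows "S 2 n = 2 / of_int n + of_int n / 2 + 1 / (2 * of_int n) - 3"
proof -
  have "coprime 2 n" "coprime n 2" using assms(2) by simp_all
  moreover have "S 1 2 = 0" by (simp add: S_one)
  ultimately have "S n 2 = 0" using abs_S_le_S_one[of 2 n] by simp
  then show ?thesis using S_reciprocity[of 2 n] assms \<open>coprime 2 n\<close> by simp
qed

lemma abs_S_minus_reciprocity_term_le:
  fixes m n :: int
  assumes m: "m > 0" and n: "n > 0" and c: "coprime m n"
  shows "\<bar>S m n - (of_int m / of_int n + of_int n / of_int m + 1 / (of_int m * of_int n) - 3)\<bar>
    \<le> (of_int m - 1) * (of_int m - 2) / of_int m"
  using S_reciprocity[OF m n c] abs_S_le_S_one[OF m, of n] S_one[OF m] c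
  by (simp add: coprime_commute)

lemma reciprocity_estimate_lt_S_two_value:
  fixes x y :: real
  assumes y: "3 \<le> y" and xy: "2 * y \<le> x - 1"
  shows "y / x + x / y + 1 / (y * x) - 3 + (y - 1) * (y - 2) / y < 2 / x + x / 2 + 1 / (2 * x) - 3"
proof -
  have pos: "x > 0" "y > 0" "x * y > 0" using y xy by auto
  have "(y - 3) * (2 * y - x + 1) \<le> 0" using y xy by (intro mult_nonneg_nonpos) auto
  then have "0 < (x + 1) * ((x - 5) - (y - 3) * (2 * y - x + 1))"
    using y xy by (intro mult_pos_pos) linarith+
  also have "\<dots> = ((2 / x + x / 2 + 1 / (2 * x) - 3)
      - (y / x + x / y + 1 / (y * x) - 3 + (y - 1) * (y - 2) / y)) * (2 * x * y)"
    using pos by (simp add: field_simps)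
  finally show ?thesis using pos by (simp add: zero_less_mult_iff)
qed

lemma reciprocity_estimate_gt_neg_S_two_value:
  fixes x y :: real
  assumes y: "1 \<le> y" and xy: "2 * y \<le> x - 3"
  shows "- (2 / x + x / 2 + 1 / (2 * x) - 3) < y / x + x / y + 1 / (y * x) - 3 - (y - 1) * (y - 2) / y"
proof -
  have pos: "x > 0" "y > 0" "x * y > 0" using y xy by auto
  have "(y - 1) * (2 * y - x + 3) \<le> 0" using y xy by (intro mult_nonneg_nonpos) auto
  then have "0 < (x - 1) * (- ((y - 1) * (2 * y - x + 3)) - (4 * y - 3 * x + 5))"
    using y xy by (intro mult_pos_pos) linarith+
  also have "\<dots> = ((2 / x + x / 2 + 1 / (2 * x) - 3)
      + (y / x + x / y + 1 / (y * x) - 3 - (y - 1) * (y - 2) / y)) * (2 * x * y)"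
    using pos by (simp add: field_simps)
  finally show ?thesis using pos by (simp add: zero_less_mult_iff)
qed

lemma S_lt_S_two_of_small:
  fixes m n :: int
  assumes "odd n" and "3 \<le> m" and "2 * m \<le> n - 1" and "coprime m n"
  shows "S m n < S 2 n"
proof -
  have "m > 0" "n > 0" using assms by simp_all
  then have "S m n \<le> of_int m / of_int n + of_int n / of_int m + 1 / (of_int m * of_int n) - 3
      + (of_int m - 1) * (of_int m - 2) / of_int m"
    using abs_S_minus_reciprocity_term_le[of m n] assms(4) by linarith
  also have "\<dots> < S 2 n"
    using reciprocity_estimate_lt_S_two_value[of "of_int m" "of_int n"] assms \<open>n > 0\<close>
    by (simp add: S_two mult.commute)
  finally show ?thesis .
qed

lemma S_reflect_lt_S_two:
  fixes k n :: int
  assumes "odd n" and "1 \<le> k" and "2 * k \<le> n - 3" and "coprime k n"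
  shows "S (n - k) n < S 2 n"
proof -
  have "k > 0" "n > 0" using assms by simp_all
  then have "of_int k / of_int n + of_int n / of_int k + 1 / (of_int k * of_int n) - 3
      - (of_int k - 1) * (of_int k - 2) / of_int k \<le> S k n"
    using abs_S_minus_reciprocity_term_le[of k n] assms(4) by linarith
  moreover have "- S 2 n < of_int k / of_int n + of_int n / of_int k + 1 / (of_int k * of_int n) - 3
      - (of_int k - 1) * (of_int k - 2) / of_int k"
    using reciprocity_estimate_gt_neg_S_two_value[of "of_int k" "of_int n"] assms \<open>n > 0\<close>
    by (simp add: S_two mult.commute)
  ultimately show ?thesis
    using S_reflect[OF \<open>n > 0\<close> assms(4)] by linarith
qed

theorem theorem2:
  fixes n m :: int
  assumes "n \<ge> 3" and "odd n"
    and "3 \<le> m" and "m \<le> n - 1" and "gcd m n = 1" and "m \<noteq> (n + 1) div 2"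
  shows "S 2 n > S m n"
proof -
  have c: "coprime m n" using assms(5) by (simp add: coprime_iff_gcd_eq_1)
  obtain t where t: "n = 2 * t + 1" using assms(2) by (metis oddE)
  show ?thesis
  proof (cases "m \<le> t")
    case True
    then show ?thesis using S_lt_S_two_of_small[OF assms(2,3) _ c] t by simp
  next
    case False
    then have "2 * (n - m) \<le> n - 3" "1 \<le> n - m" using assms(4,6) t by simp_all
    moreover have "coprime (n - m) n" using c by (simp add: coprime_diff_self_left)
    ultimately show ?thesis using S_reflect_lt_S_two[OF assms(2)] by fastforce
  qed
qed

end
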